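(* Let $h=h_{\mathbb{B}^n}$ be the Hilbert distance in the unit ball $\mathbb{B}^n\subset\mathbb{R}^n$, let $c\in\mathbb{B}^n$ and $R>0$, and let $S_h(c,R)=\{x\in\mathbb{B}^n:h_{\mathbb{B}^n}(x,c)=R\}$. Then $S_h(c,R)$ is an ellipsoid of revolution with center \[ c'=\frac{c}{\mathrm{ch}^2(R/2)-|c|^2\,\mathrm{sh}^2(R/2)}, \] whose semi-axis in the direction of $c$ (the minor semi-axis) equals \[ a_{\min}=\frac12\,\frac{(1-|c|^2)\,\mathrm{sh}(R)}{\mathrm{ch}^2(R/2)-|c|^2\,\mathrm{sh}^2(R/2)} \] and every other semi-axis equals \[ a_{\max}=\frac{\mathrm{sh}(R/2)\sqrt{1-|c|^2}}{\sqrt{\mathrm{ch}^2(R/2)-|c|^2\,\mathrm{sh}^2(R/2)}}. \] If $c=0$, then $S_h(c,R)$ is the Euclidean sphere centered at $0$ with radius $\mathrm{th}(R/2)$.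
   Context: Hilbert metric: for distinct $x,y$ in a bounded convex domain $G\subset\mathbb{R}^n$, let $u,v$ be the intersection points of the line through $x,y$ with $\partial G$, ordered $u,x,y,v$ on the line; $h_G(x,y)=\log\frac{|u-y||x-v|}{|u-x||y-v|}$. $\mathrm{sh},\mathrm{ch},\mathrm{th}$ denote the hyperbolic sine, cosine and tangent. *)

theory Defs
  imports "HOL-Analysis.Analysis"
begin

text \<open>For distinct x, y in G, the
  line through x and y meets the boundary in u and v, ordered u, x, y, v:
  u lies on the ray from y through x beyond x, v lies on the ray from x
  through y beyond y.\<close>

definition hilbert_u :: "'a::real_normed_vector set \<Rightarrow> 'a \<Rightarrow> 'a \<Rightarrow> 'a" where
  "hilbert_u G x y = (THE u. u \<in> frontier G \<and> (\<exists>t>0. u = x + t *\<^sub>R (x - y)))"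

definition hilbert_dist :: "'a::real_normed_vector set \<Rightarrow> 'a \<Rightarrow> 'a \<Rightarrow> real" where
  "hilbert_dist G x y =
     (if x = y then 0
      else (let u = hilbert_u G x y; v = hilbert_u G y x in
            ln ((norm (u - y) * norm (x - v)) / (norm (u - x) * norm (y - v)))))"

text \<open>Ellipsoid of revolution with center p, symmetry axis along the unit vector e,
  semi-axis a in direction e and semi-axis b in every direction orthogonal to e.\<close>

definition ellipsoid_rev :: "'a::real_inner \<Rightarrow> 'a \<Rightarrow> real \<Rightarrow> real \<Rightarrow> 'a set" where
  "ellipsoid_rev p e a b =
     {x. ((x - p) \<bullet> e)\<^sup>2 / a\<^sup>2 + ((norm (x - p))\<^sup>2 - ((x - p) \<bullet> e)\<^sup>2) / b\<^sup>2 = 1}"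

end

theory Submission
  imports Defs
begin

(* If the chord of the unit ball through x and c meets the sphere in x + t (x - c) and
   c + t' (c - x), then h(x, c) = ln ((1 + t)(1 + t') / (t t')), while the power of the points
   x and c with respect to the unit sphere gives |x - c|^2 t (1 + t') = 1 - |x|^2 and
   |x - c|^2 t' (1 + t) = 1 - |c|^2. Eliminating t and t' yields the Cayley-Klein formula
   ch^2 (h(x, c) / 2) (1 - |x|^2) (1 - |c|^2) = (1 - x.c)^2, so S_h(c, R) is the quadric
   (1 - x.c)^2 = ch^2 (R/2) (1 - |x|^2) (1 - |c|^2). Written in the coordinates x.c / |c| and
   |x|^2 this quadric is the stated ellipsoid of revolution about the axis through c. *)

lemma hilbert_u_on_ray:
  fixes G :: "'a::euclidean_space set"
  assumes "bounded G" "convex G" "x \<in> interior G" "x \<noteq> y"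
  obtains t where "t > 0" "x + t *\<^sub>R (x - y) \<in> frontier G"
    "hilbert_u G x y = x + t *\<^sub>R (x - y)"
proof -
  obtain d where d: "0 < d" "x + d *\<^sub>R (x - y) \<in> frontier G"
    and inside: "\<And>e. 0 \<le> e \<Longrightarrow> e < d \<Longrightarrow> x + e *\<^sub>R (x - y) \<in> interior G"
    using ray_to_frontier[OF assms(1,3)] assms(4) by (metis eq_iff_diff_eq_0)
  have "e = d" if "e > 0" "x + e *\<^sub>R (x - y) \<in> frontier G" for e
  proof (rule linorder_cases)
    assume "e < d"
    then show ?thesis using inside[of e] that by (simp add: frontier_def)
  next
    assume "d < e"
    have "x + d *\<^sub>R (x - y) \<in> open_segment x (x + e *\<^sub>R (x - y))"
      unfolding in_segment using \<open>d < e\<close> d(1) assms(4)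
      by (intro conjI exI[of _ "d / e"]) (auto simp: algebra_simps)
    also have "\<dots> \<subseteq> interior G"
      using that(2) by (intro in_interior_closure_convex_segment assms) (simp add: frontier_def)
    finally show ?thesis using d(2) by (simp add: frontier_def)
  qed
  then have "\<exists>!u. u \<in> frontier G \<and> (\<exists>t>0. u = x + t *\<^sub>R (x - y))"
    using d by blast
  then have "hilbert_u G x y = x + d *\<^sub>R (x - y)"
    unfolding hilbert_u_def using d by (auto intro!: the1_equality)
  then show thesis using that d by blast
qed

lemma hilbert_dist_eq_ln:
  fixes G :: "'a::euclidean_space set"
  assumes "bounded G" "convex G" "x \<in> interior G" "y \<in> interior G" "x \<noteq> y"
  obtains t t' where "t > 0" "t' > 0"
    "x + t *\<^sub>R (x - y) \<in> frontier G" "y + t' *\<^sub>R (y - x) \<in> frontier G"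
    "hilbert_dist G x y = ln ((1 + t) * (1 + t') / (t * t'))"
proof -
  obtain t where t: "t > 0" "x + t *\<^sub>R (x - y) \<in> frontier G"
    "hilbert_u G x y = x + t *\<^sub>R (x - y)"
    using hilbert_u_on_ray[OF assms(1-3,5)] .
  obtain t' where t': "t' > 0" "y + t' *\<^sub>R (y - x) \<in> frontier G"
    "hilbert_u G y x = y + t' *\<^sub>R (y - x)"
    using hilbert_u_on_ray[OF assms(1,2,4)] assms(5) by metis
  have "x + t *\<^sub>R (x - y) - y = (1 + t) *\<^sub>R (x - y)" "x - (y + t' *\<^sub>R (y - x)) = (1 + t') *\<^sub>R (x - y)"
    "y - (y + t' *\<^sub>R (y - x)) = t' *\<^sub>R (x - y)"
    by (simp_all add: algebra_simps)
  then have "hilbert_dist G x y = ln ((1 + t) * (1 + t') * (norm (x - y))\<^sup>2 / (t * t' * (norm (x - y))\<^sup>2))"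
    using t t' assms(5) by (simp add: hilbert_dist_def power2_eq_square mult_ac)
  also have "\<dots> = ln ((1 + t) * (1 + t') / (t * t'))"
    using assms(5) by simp
  finally show thesis using that t t' by blast
qed

lemma hilbert_dist_nonneg:
  fixes G :: "'a::euclidean_space set"
  assumes "bounded G" "convex G" "x \<in> interior G" "y \<in> interior G"
  shows "0 \<le> hilbert_dist G x y"
proof (cases "x = y")
  case False
  then obtain t t' where "t > 0" "t' > 0" and h: "hilbert_dist G x y = ln ((1 + t) * (1 + t') / (t * t'))"
    using hilbert_dist_eq_ln[OF assms] by metis
  then have "t * t' \<le> (1 + t) * (1 + t')" by (simp add: algebra_simps)
  with \<open>t > 0\<close> \<open>t' > 0\<close> show ?thesis unfolding h by simp
qed (simp add: hilbert_dist_def)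

lemma quadratic_roots_product:
  fixes a b c s1 s2 :: "'a::idom"
  assumes "a * s1\<^sup>2 + b * s1 + c = 0" "a * s2\<^sup>2 + b * s2 + c = 0" "s1 \<noteq> s2"
  shows "a * s1 * s2 = c"
proof -
  have "(s1 - s2) * (a * (s1 + s2) + b) = (a * s1\<^sup>2 + b * s1 + c) - (a * s2\<^sup>2 + b * s2 + c)"
    by (simp add: algebra_simps power2_eq_square)
  also have "\<dots> = 0"
    using assms(1,2) by simp
  finally have "a * (s1 + s2) + b = 0"
    using assms(3) by simp
  with assms(1) show ?thesis
    by algebra
qed

lemma unit_sphere_secant_product:
  fixes x d :: "'a::real_inner"
  assumes "norm (x + s1 *\<^sub>R d) = 1" "norm (x + s2 *\<^sub>R d) = 1" "s1 \<noteq> s2"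
  shows "(norm d)\<^sup>2 * s1 * s2 = x \<bullet> x - 1"
proof (rule quadratic_roots_product[OF _ _ assms(3)])
  have "(norm (x + s *\<^sub>R d))\<^sup>2 = (norm d)\<^sup>2 * s\<^sup>2 + 2 * (x \<bullet> d) * s + x \<bullet> x" for s
    unfolding power2_norm_eq_inner
    by (simp add: inner_commute algebra_simps power2_eq_square)
  then show "(norm d)\<^sup>2 * s1\<^sup>2 + 2 * (x \<bullet> d) * s1 + (x \<bullet> x - 1) = 0"
    "(norm d)\<^sup>2 * s2\<^sup>2 + 2 * (x \<bullet> d) * s2 + (x \<bullet> x - 1) = 0"
    using assms(1,2) by (metis add_diff_eq diff_self power_one)+
qed

lemma cosh_half_ln_sq:
  fixes r :: real
  assumes "r > 0"
  shows "4 * (cosh (ln r / 2))\<^sup>2 = (r + 1)\<^sup>2 / r"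
proof -
  have "cosh (ln r) = 2 * (cosh (ln r / 2))\<^sup>2 - 1"
    using cosh_double_cosh[of "ln r / 2"] by simp
  then show ?thesis
    using assms by (simp add: cosh_ln_real field_simps power2_eq_square)
qed

lemma cosh_half_hilbert_dist_ball:
  fixes x c :: "'a::euclidean_space"
  assumes "norm x < 1" "norm c < 1"
  shows "(cosh (hilbert_dist (ball 0 1) x c / 2))\<^sup>2 * ((1 - x \<bullet> x) * (1 - c \<bullet> c)) = (1 - x \<bullet> c)\<^sup>2"
proof (cases "x = c")
  case False
  obtain t t' where "t > 0" "t' > 0" and on_sphere:
    "norm (x + t *\<^sub>R (x - c)) = 1" "norm (c + t' *\<^sub>R (c - x)) = 1"
    and h: "hilbert_dist (ball 0 1) x c = ln ((1 + t) * (1 + t') / (t * t'))"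
    using hilbert_dist_eq_ln[of "ball 0 1" x c] assms False by auto
  define \<delta> where "\<delta> = (norm (x - c))\<^sup>2"
  define A where "A = (1 + t) * (1 + t')"
  define B where "B = t * t'"
  have "A > 0" "B > 0"
    using \<open>t > 0\<close> \<open>t' > 0\<close> by (simp_all add: A_def B_def)
  have "c + t' *\<^sub>R (c - x) = x + (- (1 + t')) *\<^sub>R (x - c)"
    "x + t *\<^sub>R (x - c) = c + (- (1 + t)) *\<^sub>R (c - x)"
    by (simp_all add: algebra_simps)
  then have px: "\<delta> * t * (1 + t') = 1 - x \<bullet> x" and pc: "\<delta> * t' * (1 + t) = 1 - c \<bullet> c"
    using unit_sphere_secant_product[of x t "x - c" "- (1 + t')"]
      unit_sphere_secant_product[of c t' "c - x" "- (1 + t)"]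
      on_sphere \<open>t > 0\<close> \<open>t' > 0\<close>
    by (auto simp: \<delta>_def norm_minus_commute algebra_simps)
  have "\<delta> = x \<bullet> x - 2 * (x \<bullet> c) + c \<bullet> c"
    unfolding \<delta>_def power2_norm_eq_inner by (simp add: algebra_simps inner_commute)
  moreover have "\<delta> * (A + B) = \<delta> + \<delta> * t * (1 + t') + \<delta> * t' * (1 + t)"
    by (simp add: A_def B_def algebra_simps)
  ultimately have sum: "\<delta> * (A + B) = 2 * (1 - x \<bullet> c)"
    unfolding px pc by simp
  have "(1 - x \<bullet> x) * (1 - c \<bullet> c) = (\<delta> * t * (1 + t')) * (\<delta> * t' * (1 + t))"
    by (simp add: px pc)
  also have "\<dots> = \<delta>\<^sup>2 * (A * B)"
    by (simp add: A_def B_def power2_eq_square mult_ac)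
  finally have prod: "(1 - x \<bullet> x) * (1 - c \<bullet> c) = \<delta>\<^sup>2 * (A * B)" .
  let ?ch = "(cosh (hilbert_dist (ball 0 1) x c / 2))\<^sup>2"
  have "4 * ?ch = (A / B + 1)\<^sup>2 / (A / B)"
    using cosh_half_ln_sq[of "A / B"] \<open>A > 0\<close> \<open>B > 0\<close> unfolding h A_def B_def by simp
  also have "\<dots> = (A + B)\<^sup>2 / (A * B)"
    using \<open>A > 0\<close> \<open>B > 0\<close> by (simp add: field_simps power2_eq_square)
  finally have "4 * ?ch * (A * B) * \<delta>\<^sup>2 = (A + B)\<^sup>2 * \<delta>\<^sup>2"
    using \<open>A > 0\<close> \<open>B > 0\<close> by simp
  then have "4 * (?ch * ((1 - x \<bullet> x) * (1 - c \<bullet> c))) = (\<delta> * (A + B))\<^sup>2"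
    unfolding prod by (simp add: power_mult_distrib mult_ac)
  then show ?thesis
    unfolding sum power_mult_distrib by simp
qed (simp add: hilbert_dist_def power2_eq_square)

lemma inner_self_less_one: "norm (x::'a::real_inner) < 1 \<Longrightarrow> x \<bullet> x < 1"
  by (metis norm_ge_zero power2_norm_eq_inner power_less_one_iff zero_less_numeral)

lemma hilbert_sphere_ball_eq_quadric:
  fixes c :: "'a::euclidean_space"
  assumes c: "norm c < 1" and "R > 0"
  shows "{x \<in> ball 0 1. hilbert_dist (ball 0 1) x c = R}
       = {x. (1 - x \<bullet> c)\<^sup>2 = (cosh (R / 2))\<^sup>2 * ((1 - x \<bullet> x) * (1 - c \<bullet> c))}"
proof -
  have "c \<bullet> c < 1" using inner_self_less_one[OF c] .
  have "hilbert_dist (ball 0 1) x c = R \<longleftrightarrow>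
      (1 - x \<bullet> c)\<^sup>2 = (cosh (R / 2))\<^sup>2 * ((1 - x \<bullet> x) * (1 - c \<bullet> c))"
    if x: "norm x < 1" for x
  proof -
    have "x \<bullet> x < 1" using inner_self_less_one[OF x] .
    have "0 \<le> hilbert_dist (ball 0 1) x c"
      using hilbert_dist_nonneg[of "ball 0 1" x c] x c by simp
    then have "hilbert_dist (ball 0 1) x c = R \<longleftrightarrow>
        (cosh (hilbert_dist (ball 0 1) x c / 2))\<^sup>2 = (cosh (R / 2))\<^sup>2"
      using \<open>R > 0\<close> by simp
    also have "\<dots> \<longleftrightarrow> (cosh (hilbert_dist (ball 0 1) x c / 2))\<^sup>2 * ((1 - x \<bullet> x) * (1 - c \<bullet> c))
        = (cosh (R / 2))\<^sup>2 * ((1 - x \<bullet> x) * (1 - c \<bullet> c))"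
      using \<open>x \<bullet> x < 1\<close> \<open>c \<bullet> c < 1\<close> by (simp only: mult_cancel_right) simp
    also have "\<dots> \<longleftrightarrow> (1 - x \<bullet> c)\<^sup>2 = (cosh (R / 2))\<^sup>2 * ((1 - x \<bullet> x) * (1 - c \<bullet> c))"
      unfolding cosh_half_hilbert_dist_ball[OF x c] ..
    finally show ?thesis .
  qed
  moreover have "norm x < 1"
    if q: "(1 - x \<bullet> c)\<^sup>2 = (cosh (R / 2))\<^sup>2 * ((1 - x \<bullet> x) * (1 - c \<bullet> c))" for x
  proof (rule ccontr)
    assume "\<not> norm x < 1"
    then have "1 \<le> x \<bullet> x"
      by (metis not_less one_le_power power2_norm_eq_inner)
    then have "(cosh (R / 2))\<^sup>2 * ((1 - x \<bullet> x) * (1 - c \<bullet> c)) \<le> 0"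
      using \<open>c \<bullet> c < 1\<close> by (intro mult_nonneg_nonpos zero_le_power2 mult_nonpos_nonneg) auto
    with q have "(1 - x \<bullet> c)\<^sup>2 = 0"
      by (metis antisym zero_le_power2)
    with q \<open>c \<bullet> c < 1\<close> have "x \<bullet> c = 1" "x \<bullet> x = 1"
      by simp_all
    then have "1 \<le> norm c"
      using norm_cauchy_schwarz[of x c] by (simp add: norm_eq_sqrt_inner)
    then show False using c by simp
  qed
  ultimately show ?thesis by auto
qed

text \<open>Here z and X stand for x \<bullet> e and x \<bullet> x, where k e = c with e a unit vector.\<close>

lemma ellipse_coords_iff_quadric:
  fixes C Sh k z X :: real
  assumes C: "C\<^sup>2 = Sh\<^sup>2 + 1" and "Sh \<noteq> 0" and "k\<^sup>2 < 1"
  defines "D \<equiv> C\<^sup>2 - k\<^sup>2 * Sh\<^sup>2"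
  shows "(z - k / D)\<^sup>2 / ((1 - k\<^sup>2) * Sh * C / D)\<^sup>2 + (X - z\<^sup>2) / (Sh\<^sup>2 * (1 - k\<^sup>2) / D) = 1
     \<longleftrightarrow> (1 - k * z)\<^sup>2 = C\<^sup>2 * ((1 - X) * (1 - k\<^sup>2))"
proof -
  define m where "m = 1 - k\<^sup>2"
  have "m > 0"
    using assms(3) by (simp add: m_def)
  have "C \<noteq> 0"
    using C by (smt (verit) zero_le_power2 zero_power2)
  have D: "D = 1 + m * Sh\<^sup>2"
    unfolding D_def m_def C by (simp add: algebra_simps)
  then have "D > 0"
    using \<open>m > 0\<close> by (simp add: add_pos_nonneg)
  let ?L = "(z - k / D)\<^sup>2 / (m * Sh * C / D)\<^sup>2 + (X - z\<^sup>2) / (Sh\<^sup>2 * m / D)"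
  have "?L - 1 = ((D * z - k)\<^sup>2 + (X - z\<^sup>2) * D * m * C\<^sup>2 - m\<^sup>2 * Sh\<^sup>2 * C\<^sup>2) / (m * Sh * C)\<^sup>2"
    using \<open>m > 0\<close> \<open>C \<noteq> 0\<close> \<open>D > 0\<close> \<open>Sh \<noteq> 0\<close> by (simp add: field_simps power2_eq_square)
  also have "(D * z - k)\<^sup>2 + (X - z\<^sup>2) * D * m * C\<^sup>2 - m\<^sup>2 * Sh\<^sup>2 * C\<^sup>2
      = D * ((1 - k * z)\<^sup>2 - C\<^sup>2 * ((1 - X) * m))"
    unfolding D C m_def by (simp add: algebra_simps power2_eq_square)
  finally have diff: "?L - 1 = D * ((1 - k * z)\<^sup>2 - C\<^sup>2 * ((1 - X) * m)) / (m * Sh * C)\<^sup>2" .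
  have "?L = 1 \<longleftrightarrow> D * ((1 - k * z)\<^sup>2 - C\<^sup>2 * ((1 - X) * m)) / (m * Sh * C)\<^sup>2 = 0"
    unfolding eq_iff_diff_eq_0[of ?L] diff ..
  also have "\<dots> \<longleftrightarrow> (1 - k * z)\<^sup>2 = C\<^sup>2 * ((1 - X) * m)"
    using \<open>m > 0\<close> \<open>C \<noteq> 0\<close> \<open>D > 0\<close> \<open>Sh \<noteq> 0\<close> by simp
  finally show ?thesis
    unfolding m_def .
qed

lemma ellipsoid_rev_on_axis:
  fixes e :: "'a::real_inner"
  assumes "norm e = 1"
  shows "ellipsoid_rev (s *\<^sub>R e) e a b = {x. (x \<bullet> e - s)\<^sup>2 / a\<^sup>2 + (x \<bullet> x - (x \<bullet> e)\<^sup>2) / b\<^sup>2 = 1}"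
proof -
  have "e \<bullet> e = 1"
    using assms by (simp add: norm_eq_1)
  then have "(x - s *\<^sub>R e) \<bullet> e = x \<bullet> e - s"
    and "(norm (x - s *\<^sub>R e))\<^sup>2 - ((x - s *\<^sub>R e) \<bullet> e)\<^sup>2 = x \<bullet> x - (x \<bullet> e)\<^sup>2" for x
    unfolding power2_norm_eq_inner
    by (simp_all add: inner_commute algebra_simps power2_eq_square)
  then show ?thesis
    unfolding ellipsoid_rev_def by simp
qed

lemma cosh_sq_minus_scaled_sinh_sq_pos:
  fixes k y :: real
  assumes "k\<^sup>2 < 1"
  shows "0 < (cosh y)\<^sup>2 - k\<^sup>2 * (sinh y)\<^sup>2"
proof -
  have "(cosh y)\<^sup>2 - k\<^sup>2 * (sinh y)\<^sup>2 = 1 + (1 - k\<^sup>2) * (sinh y)\<^sup>2"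
    by (simp add: cosh_square_eq algebra_simps)
  then show ?thesis
    using assms by (simp add: add_pos_nonneg)
qed

lemma quadric_eq_ellipsoid_rev:
  fixes c :: "'a::real_inner" and R :: real
  assumes "c \<noteq> 0" "norm c < 1" "R > 0"
  defines "D \<equiv> (cosh (R / 2))\<^sup>2 - (norm c)\<^sup>2 * (sinh (R / 2))\<^sup>2"
  shows "{x. (1 - x \<bullet> c)\<^sup>2 = (cosh (R / 2))\<^sup>2 * ((1 - x \<bullet> x) * (1 - c \<bullet> c))}
    = ellipsoid_rev ((1 / D) *\<^sub>R c) (c /\<^sub>R norm c)
        ((1 / 2) * ((1 - (norm c)\<^sup>2) * sinh R) / D) (sinh (R / 2) * sqrt (1 - (norm c)\<^sup>2) / sqrt D)"
proof -
  define k where "k = norm c"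
  define e where "e = c /\<^sub>R k"
  have "k > 0" "k\<^sup>2 < 1" "norm e = 1"
    using assms(1,2) by (auto simp: k_def e_def abs_square_less_1)
  have c: "c = k *\<^sub>R e"
    using \<open>k > 0\<close> by (simp add: e_def)
  have "D > 0"
    using cosh_sq_minus_scaled_sinh_sq_pos[OF \<open>k\<^sup>2 < 1\<close>] by (simp add: D_def k_def)
  have "(1 / 2) * ((1 - k\<^sup>2) * sinh R) / D = (1 - k\<^sup>2) * sinh (R / 2) * cosh (R / 2) / D"
    using sinh_double[of "R / 2"] by simp
  moreover have "(sinh (R / 2) * sqrt (1 - k\<^sup>2) / sqrt D)\<^sup>2 = (sinh (R / 2))\<^sup>2 * (1 - k\<^sup>2) / D"
    using \<open>k\<^sup>2 < 1\<close> \<open>D > 0\<close> by (simp add: power_mult_distrib power_divide)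
  moreover have "(1 / D) *\<^sub>R c = (k / D) *\<^sub>R e"
    by (simp add: c)
  ultimately have "ellipsoid_rev ((1 / D) *\<^sub>R c) (c /\<^sub>R norm c)
        ((1 / 2) * ((1 - (norm c)\<^sup>2) * sinh R) / D) (sinh (R / 2) * sqrt (1 - (norm c)\<^sup>2) / sqrt D)
      = {x. (x \<bullet> e - k / D)\<^sup>2 / ((1 - k\<^sup>2) * sinh (R / 2) * cosh (R / 2) / D)\<^sup>2
            + (x \<bullet> x - (x \<bullet> e)\<^sup>2) / ((sinh (R / 2))\<^sup>2 * (1 - k\<^sup>2) / D) = 1}"
    using ellipsoid_rev_on_axis[OF \<open>norm e = 1\<close>] by (simp add: k_def[symmetric] e_def[symmetric])
  also have "\<dots> = {x. (1 - k * (x \<bullet> e))\<^sup>2 = (cosh (R / 2))\<^sup>2 * ((1 - x \<bullet> x) * (1 - k\<^sup>2))}"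
    using ellipse_coords_iff_quadric[OF cosh_square_eq _ \<open>k\<^sup>2 < 1\<close>] \<open>R > 0\<close>
    by (simp add: D_def k_def)
  also have "\<dots> = {x. (1 - x \<bullet> c)\<^sup>2 = (cosh (R / 2))\<^sup>2 * ((1 - x \<bullet> x) * (1 - c \<bullet> c))}"
    using \<open>norm e = 1\<close> by (simp add: c power2_eq_square norm_eq_1)
  finally show ?thesis ..
qed

lemma hilbert_sphere_semi_axes:
  fixes k R :: real
  assumes "k\<^sup>2 < 1" "R > 0"
  defines "D \<equiv> (cosh (R / 2))\<^sup>2 - k\<^sup>2 * (sinh (R / 2))\<^sup>2"
  shows "0 < (1 / 2) * ((1 - k\<^sup>2) * sinh R) / D"
    and "(1 / 2) * ((1 - k\<^sup>2) * sinh R) / D \<le> sinh (R / 2) * sqrt (1 - k\<^sup>2) / sqrt D"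
proof -
  define C where "C = cosh (R / 2)"
  define Sh where "Sh = sinh (R / 2)"
  define m where "m = 1 - k\<^sup>2"
  have "m > 0" "Sh > 0" "C > 0" "D > 0"
    using assms cosh_sq_minus_scaled_sinh_sq_pos[OF assms(1)]
    by (simp_all add: m_def Sh_def C_def D_def)
  have a: "(1 / 2) * ((1 - k\<^sup>2) * sinh R) / D = m * Sh * C / D"
    using sinh_double[of "R / 2"] by (simp add: m_def Sh_def C_def)
  show "0 < (1 / 2) * ((1 - k\<^sup>2) * sinh R) / D"
    unfolding a using \<open>m > 0\<close> \<open>Sh > 0\<close> \<open>C > 0\<close> \<open>D > 0\<close> by simp
  have "D - m * C\<^sup>2 = k\<^sup>2"
    unfolding D_def m_def C_def cosh_square_eq by (simp add: algebra_simps)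
  then have "m * C\<^sup>2 \<le> D"
    using zero_le_power2[of k] by linarith
  have "(m * Sh * C / D)\<^sup>2 = Sh\<^sup>2 * m * (m * C\<^sup>2) / D\<^sup>2"
    by (simp add: power_mult_distrib power_divide power2_eq_square mult_ac)
  also have "\<dots> \<le> Sh\<^sup>2 * m * D / D\<^sup>2"
    using \<open>m * C\<^sup>2 \<le> D\<close> \<open>m > 0\<close> by (intro divide_right_mono mult_left_mono) simp_all
  also have "\<dots> = (Sh * sqrt m / sqrt D)\<^sup>2"
    using \<open>m > 0\<close> \<open>D > 0\<close> by (simp add: power_mult_distrib power_divide power2_eq_square)
  finally have "(m * Sh * C / D)\<^sup>2 \<le> (Sh * sqrt m / sqrt D)\<^sup>2" .
  then have "m * Sh * C / D \<le> Sh * sqrt m / sqrt D"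
    by (rule power2_le_imp_le) (use \<open>m > 0\<close> \<open>Sh > 0\<close> \<open>D > 0\<close> in simp)
  then show "(1 / 2) * ((1 - k\<^sup>2) * sinh R) / D \<le> sinh (R / 2) * sqrt (1 - k\<^sup>2) / sqrt D"
    unfolding a by (simp add: Sh_def m_def)
qed

lemma hilbert_sphere_ball_center_zero:
  fixes R :: real
  assumes "R > 0"
  shows "{x::'a::euclidean_space \<in> ball 0 1. hilbert_dist (ball 0 1) x 0 = R} = sphere 0 (tanh (R / 2))"
proof -
  define C where "C = cosh (R / 2)"
  define Sh where "Sh = sinh (R / 2)"
  have "C > 0" "Sh > 0" and C: "C\<^sup>2 - 1 = Sh\<^sup>2"
    using assms by (simp_all add: C_def Sh_def cosh_square_eq)
  have on_sphere: "1 = C\<^sup>2 * (1 - x \<bullet> x) \<longleftrightarrow> norm x = tanh (R / 2)" for x :: 'a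
  proof -
    have "1 = C\<^sup>2 * (1 - x \<bullet> x) \<longleftrightarrow> x \<bullet> x * C\<^sup>2 = C\<^sup>2 - 1"
      by (auto simp: algebra_simps)
    also have "\<dots> \<longleftrightarrow> (norm x)\<^sup>2 = (Sh / C)\<^sup>2"
      using \<open>C > 0\<close> unfolding C by (simp add: power2_norm_eq_inner power_divide eq_divide_eq)
    also have "\<dots> \<longleftrightarrow> norm x = Sh / C"
      using \<open>C > 0\<close> \<open>Sh > 0\<close> by simp
    finally show ?thesis
      by (simp add: tanh_def C_def Sh_def)
  qed
  have "{x::'a \<in> ball 0 1. hilbert_dist (ball 0 1) x 0 = R} = {x. 1 = C\<^sup>2 * (1 - x \<bullet> x)}"
    using hilbert_sphere_ball_eq_quadric[of 0 R] assms by (simp add: C_def)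
  then show ?thesis
    using on_sphere by (simp add: set_eq_iff)
qed

theorem theorem4p3:
  fixes c :: "'a::euclidean_space" and R :: real
  assumes "c \<in> ball 0 1" and "R > 0"
  defines "S \<equiv> {x \<in> ball 0 1. hilbert_dist (ball 0 1) x c = R}"
    and "D \<equiv> (cosh (R/2))\<^sup>2 - (norm c)\<^sup>2 * (sinh (R/2))\<^sup>2"
  defines "c' \<equiv> (1 / D) *\<^sub>R c"
    and "a_min \<equiv> (1/2) * ((1 - (norm c)\<^sup>2) * sinh R) / D"
    and "a_max \<equiv> sinh (R/2) * sqrt (1 - (norm c)\<^sup>2) / sqrt D"
  shows "(c \<noteq> 0 \<longrightarrow> S = ellipsoid_rev c' (c /\<^sub>R norm c) a_min a_max)
         \<and> 0 < a_min \<and> a_min \<le> a_max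
         \<and> (c = 0 \<longrightarrow> S = sphere 0 (tanh (R/2)))"
proof -
  have c: "norm c < 1" and "(norm c)\<^sup>2 < 1"
    using assms(1) by (simp_all add: abs_square_less_1)
  have "S = {x. (1 - x \<bullet> c)\<^sup>2 = (cosh (R / 2))\<^sup>2 * ((1 - x \<bullet> x) * (1 - c \<bullet> c))}"
    unfolding S_def using hilbert_sphere_ball_eq_quadric[OF c \<open>R > 0\<close>] .
  then have "c \<noteq> 0 \<longrightarrow> S = ellipsoid_rev c' (c /\<^sub>R norm c) a_min a_max"
    using quadric_eq_ellipsoid_rev[OF _ c \<open>R > 0\<close>] by (simp add: D_def c'_def a_min_def a_max_def)
  moreover have "0 < a_min" "a_min \<le> a_max"
    using hilbert_sphere_semi_axes[OF \<open>(norm c)\<^sup>2 < 1\<close> \<open>R > 0\<close>]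
    by (simp_all add: D_def a_min_def a_max_def)
  moreover have "c = 0 \<longrightarrow> S = sphere 0 (tanh (R / 2))"
    using hilbert_sphere_ball_center_zero[OF \<open>R > 0\<close>, where 'a = 'a] by (simp add: S_def)
  ultimately show ?thesis
    by blast
qed

end
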